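(* The Euclidean plane $\mathbb R^2$ is strongly discrete homogeneous.
   Context: A subset $D$ of $X$ is discrete if each point of $X$ has a neighbourhood containing at most one point of $D$. A Hausdorff space $X$ is strongly discrete homogeneous (sDH) if for any two discrete subsets $A,B$ of $X$ and any bijection $f\colon A\to B$, $f$ extends to a homeomorphism of $X$ onto itself. *)

theory Defs
  imports "HOL-Analysis.Analysis"
begin

definition discrete_subset :: "'a::topological_space set \<Rightarrow> bool" where
  "discrete_subset D \<longleftrightarrow>
     (\<forall>x. \<exists>U. open U \<and> x \<in> U \<and> (\<forall>a\<in>U \<inter> D. \<forall>b\<in>U \<inter> D. a = b))"

text \<open>Strongly discrete homogeneous (the space is the whole type; Hausdorffness
is imposed by the class t2_space).\<close>
definition sDH :: "'a::t2_space itself \<Rightarrow> bool" where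
  "sDH _ \<longleftrightarrow>
     (\<forall>(A::'a set) (B::'a set) f. discrete_subset A \<and> discrete_subset B \<and> bij_betw f A B \<longrightarrow>
        (\<exists>h g. homeomorphism UNIV UNIV h g \<and> (\<forall>x\<in>A. h x = f x)))"

end

theory Submission
  imports Defs
begin

(* A discrete subset A of the plane is closed and countable. Pick a centre c whose distances
   to the points of A are pairwise distinct: the points equidistant from two given points form
   a hyperplane, and countably many null sets do not cover the plane. A radial twist
   z \<mapsto> (z - c) * cis (\<phi> |z - c|), with \<phi> a Tietze extension of the angles
   -Arg (a - c) prescribed on the closed discrete set of radii, then moves A onto the real axis.
   A bijection \<sigma> between discrete subsets of the real axis is realised by three shears,
   (t, 0) \<mapsto> (t, \<sigma> t) \<mapsto> (\<sigma> t, \<sigma> t) \<mapsto> (\<sigma> t, 0),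
   whose displacements are again Tietze extensions; the middle one is well defined because
   \<sigma> is injective. Conjugating by these homeomorphisms gives the property for \<complex>,
   and it transfers to \<real>\<^sup>2 because it is a topological invariant. *)

lemma discrete_subsetE:
  assumes "discrete_subset A"
  obtains U where "open U" "x \<in> U" "\<And>a b. a \<in> U \<inter> A \<Longrightarrow> b \<in> U \<inter> A \<Longrightarrow> a = b"
  using assms unfolding discrete_subset_def by metis

lemma discrete_subset_iff_sparse_in_UNIV:
  fixes A :: "'a::t1_space set"
  shows "discrete_subset A \<longleftrightarrow> A sparse_in UNIV"
  unfolding sparse_in_open[OF open_UNIV]
proof (intro iffI ballI notI)
  fix x assume "discrete_subset A" "x islimpt A"
  obtain U where U: "open U" "x \<in> U" "\<And>a b. a \<in> U \<inter> A \<Longrightarrow> b \<in> U \<inter> A \<Longrightarrow> a = b"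
    using discrete_subsetE[OF \<open>discrete_subset A\<close>, where x=x] by blast
  obtain a where a: "a \<in> A" "a \<in> U" "a \<noteq> x"
    using islimptE[OF \<open>x islimpt A\<close> U(2,1)] .
  obtain b where "b \<in> A" "b \<in> U - {a}"
    using islimptE[OF \<open>x islimpt A\<close> _ open_Diff[OF U(1) closed_singleton[of a]]] U(2) a(3)
    by blast
  then have "b = a"
    using U(3) a by (meson Diff_iff IntI)
  with \<open>b \<in> U - {a}\<close> show False by simp
next
  assume no_limpt: "\<forall>x\<in>UNIV. \<not> x islimpt A"
  show "discrete_subset A"
    unfolding discrete_subset_def
  proof
    fix x
    obtain T where "open T" "x \<in> T" "\<And>y. y \<in> A \<Longrightarrow> y \<in> T \<Longrightarrow> y = x"
      using no_limpt[rule_format, OF UNIV_I, of x] unfolding islimpt_def by metis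
    then show "\<exists>U. open U \<and> x \<in> U \<and> (\<forall>a\<in>U \<inter> A. \<forall>b\<in>U \<inter> A. a = b)"
      by auto
  qed
qed

lemma discrete_subset_vimage:
  assumes "continuous_on UNIV g" "inj g" "discrete_subset A"
  shows "discrete_subset (g -` A)"
  unfolding discrete_subset_def
proof
  fix x
  obtain U where U: "open U" "g x \<in> U" "\<And>a b. a \<in> U \<inter> A \<Longrightarrow> b \<in> U \<inter> A \<Longrightarrow> a = b"
    using discrete_subsetE[OF assms(3), where x="g x"] by blast
  have "a = b" if "a \<in> g -` U \<inter> g -` A" "b \<in> g -` U \<inter> g -` A" for a b
  proof -
    have "g a = g b" using that by (intro U(3)) auto
    then show "a = b" by (rule injD[OF assms(2)])
  qed
  moreover have "open (g -` U)" "x \<in> g -` U"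
    using open_vimage[OF U(1) assms(1)] U(2) by auto
  ultimately show "\<exists>V. open V \<and> x \<in> V \<and> (\<forall>a\<in>V \<inter> g -` A. \<forall>b\<in>V \<inter> g -` A. a = b)"
    by metis
qed

lemma discrete_subset_homeomorphism_image:
  assumes "homeomorphism UNIV UNIV h h'" "discrete_subset A"
  shows "discrete_subset (h ` A)"
proof -
  have inv: "h' (h x) = x" "h (h' y) = y" for x y
    using homeomorphism_apply1[OF assms(1)] homeomorphism_apply2[OF assms(1)] by auto
  then have "h ` A = h' -` A"
    by (auto intro: rev_image_eqI)
  moreover have "inj h'"
    using inv by (metis injI)
  ultimately show ?thesis
    using discrete_subset_vimage[OF homeomorphism_cont2[OF assms(1)] _ assms(2)] by simp
qed

lemma discrete_subset_countable:
  fixes A :: "'a::euclidean_space set"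
  assumes "discrete_subset A"
  shows "countable A"
  using sparse_imp_countable[OF open_UNIV] assms
  by (simp add: discrete_subset_iff_sparse_in_UNIV)

lemma discrete_subset_compact_finite:
  fixes A :: "'a::t1_space set"
  assumes "discrete_subset A" "compact K"
  shows "finite (K \<inter> A)"
  using assms sparse_in_compact_finite sparse_in_subset
  by (metis discrete_subset_iff_sparse_in_UNIV subset_UNIV)

lemma discrete_subset_dist_image:
  fixes A :: "'a::heine_borel set"
  assumes "discrete_subset A"
  shows "discrete_subset ((\<lambda>a. dist a c) ` A)"
  unfolding discrete_subset_iff_sparse_in_UNIV sparse_in_open[OF open_UNIV]
proof (intro ballI notI)
  fix r assume "r islimpt (\<lambda>a. dist a c) ` A"
  then have "infinite ((\<lambda>a. dist a c) ` A \<inter> ball r 1)"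
    by (simp add: islimpt_eq_infinite_ball)
  moreover have
    "(\<lambda>a. dist a c) ` A \<inter> ball r 1 \<subseteq> (\<lambda>a. dist a c) ` (cball c (\<bar>r\<bar> + 1) \<inter> A)"
    by (auto simp: dist_real_def dist_commute)
  moreover have "finite (cball c (\<bar>r\<bar> + 1) \<inter> A)"
    using discrete_subset_compact_finite[OF assms compact_cball] .
  ultimately show False
    by (meson finite_imageI finite_subset)
qed

lemma discrete_subset_extension:
  fixes S :: "'a::{metric_space,second_countable_topology} set"
    and f :: "'a \<Rightarrow> 'b::real_inner"
  assumes "discrete_subset S"
  obtains g where "continuous_on UNIV g" "\<And>x. x \<in> S \<Longrightarrow> g x = f x"
proof -
  have "S sparse_in UNIV"
    using assms by (simp add: discrete_subset_iff_sparse_in_UNIV)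
  then have "closed S" "discrete S"
    using sparse_in_UNIV_imp_closed sparse_in_open[OF open_UNIV]
    by (auto simp: discrete_def isolated_in_islimpt_iff)
  then show ?thesis
    using Tietze_unbounded[of S f UNIV] continuous_on_discrete that by auto
qed

definition extends_to_homeomorphism ::
    "('a::topological_space \<Rightarrow> 'b::topological_space) \<Rightarrow> 'a set \<Rightarrow> bool" where
  "extends_to_homeomorphism f A \<longleftrightarrow>
     (\<exists>h g. homeomorphism UNIV UNIV h g \<and> (\<forall>x\<in>A. h x = f x))"

lemma extends_to_homeomorphismI:
  assumes "homeomorphism UNIV UNIV h g" "\<And>x. x \<in> A \<Longrightarrow> h x = f x"
  shows "extends_to_homeomorphism f A"
  using assms unfolding extends_to_homeomorphism_def by auto

lemma extends_to_homeomorphismE: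
  assumes "extends_to_homeomorphism f A"
  obtains h g where "homeomorphism UNIV UNIV h g" "\<And>x. x \<in> A \<Longrightarrow> h x = f x"
  using assms unfolding extends_to_homeomorphism_def by metis

lemma extends_to_homeomorphism_conjugate:
  assumes "homeomorphism UNIV UNIV k k'" "homeomorphism UNIV UNIV l l'"
    and "extends_to_homeomorphism (\<lambda>x. l (f (k' x))) (k ` A)"
  shows "extends_to_homeomorphism f A"
proof -
  obtain h h' where h: "homeomorphism UNIV UNIV h h'"
    "\<And>x. x \<in> k ` A \<Longrightarrow> h x = l (f (k' x))"
    by (rule extends_to_homeomorphismE[OF assms(3)]) blast
  show ?thesis
  proof (rule extends_to_homeomorphismI[OF homeomorphism_compose[OF
        homeomorphism_compose[OF assms(1) h(1)] homeomorphism_symD[OF assms(2)]]])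
    fix a assume "a \<in> A"
    then show "(l' \<circ> (h \<circ> k)) a = f a"
      using h(2)[of "k a"] homeomorphism_apply1[OF assms(1)] homeomorphism_apply1[OF assms(2)]
      by simp
  qed
qed

lemma bij_betw_conjugate:
  assumes "\<And>x. k' (k x) = x" "\<And>y. l' (l y) = y" "bij_betw f A B"
  shows "bij_betw (\<lambda>x. l (f (k' x))) (k ` A) (l ` B)"
proof -
  have "bij_betw k' (k ` A) A"
    by (rule bij_betw_imageI) (auto intro: inj_onI simp: image_image assms(1))
  moreover have "bij_betw l B (l ` B)"
    by (rule bij_betw_imageI[OF inj_on_inverseI[where g = l']]) (simp_all add: assms(2))
  ultimately show ?thesis
    using bij_betw_trans[OF bij_betw_trans[OF _ assms(3)]] unfolding comp_def by blast
qed

lemma sDH_iff: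
  "sDH TYPE('a::t2_space) \<longleftrightarrow>
    (\<forall>(A :: 'a set) (B :: 'a set) f. discrete_subset A \<and> discrete_subset B \<and> bij_betw f A B
      \<longrightarrow> extends_to_homeomorphism f A)"
  by (simp only: sDH_def extends_to_homeomorphism_def)

lemma sDH_homeomorphic:
  assumes "(UNIV :: 'a::t2_space set) homeomorphic (UNIV :: 'b::t2_space set)" "sDH TYPE('a)"
  shows "sDH TYPE('b)"
  unfolding sDH_iff
proof (intro allI impI, elim conjE)
  fix A B :: "'b set" and f
  assume A: "discrete_subset A" and B: "discrete_subset B" and f: "bij_betw f A B"
  obtain j :: "'a \<Rightarrow> 'b" and j' where "homeomorphism UNIV UNIV j j'"
    using assms(1) unfolding homeomorphic_def by blast
  then have j: "homeomorphism UNIV UNIV j' j"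
    by (rule homeomorphism_symD)
  have "bij_betw (\<lambda>x. j' (f (j x))) (j' ` A) (j' ` B)"
    by (rule bij_betw_conjugate[where k' = j and l' = j, OF _ _ f])
      (simp_all add: homeomorphism_apply1[OF j])
  then have "extends_to_homeomorphism (\<lambda>x. j' (f (j x))) (j' ` A)"
    using assms(2) discrete_subset_homeomorphism_image[OF j A]
      discrete_subset_homeomorphism_image[OF j B] unfolding sDH_iff by blast
  then show "extends_to_homeomorphism f A"
    by (rule extends_to_homeomorphism_conjugate[OF j j])
qed

lemma negligible_equidistant_set:
  fixes a b :: "'a::euclidean_space"
  assumes "a \<noteq> b"
  shows "negligible {c. dist a c = dist b c}"
proof -
  have "dist a c = dist b c \<longleftrightarrow> (2 *\<^sub>R (a - b)) \<bullet> c = (norm a)\<^sup>2 - (norm b)\<^sup>2" for c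
  proof -
    have "dist a c = dist b c \<longleftrightarrow> (dist a c)\<^sup>2 = (dist b c)\<^sup>2"
      by (simp add: power2_eq_iff_nonneg)
    also have "\<dots> \<longleftrightarrow> (2 *\<^sub>R (a - b)) \<bullet> c = (norm a)\<^sup>2 - (norm b)\<^sup>2"
      by (simp add: dist_norm power2_norm_eq_inner inner_diff_left inner_diff_right
          inner_commute algebra_simps eq_commute)
    finally show ?thesis .
  qed
  then show ?thesis
    using negligible_hyperplane[of "2 *\<^sub>R (a - b)"] assms by simp
qed

lemma inj_on_dist_generic_point:
  fixes A :: "'a::euclidean_space set"
  assumes "countable A"
  obtains c where "inj_on (\<lambda>a. dist a c) A"
proof -
  let ?E = "(\<lambda>(a, b). {c. dist a c = dist b c}) ` (A \<times> A - Id)"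
  have "countable (A \<times> A - Id)"
    using assms by (blast intro: countable_subset[OF Diff_subset] countable_SIGMA)
  then have "negligible (\<Union>?E)"
    by (intro negligible_countable_Union) (auto intro: negligible_equidistant_set)
  then have "\<Union>?E \<noteq> UNIV"
    using non_negligible_UNIV by metis
  then obtain c where "c \<notin> \<Union>?E"
    by blast
  then have "inj_on (\<lambda>a. dist a c) A"
    by (auto intro!: inj_onI)
  then show thesis ..
qed

lemma mult_cis_minus_Arg: "z * cis (- Arg z) = of_real (cmod z)"
proof -
  have "z * cis (- Arg z) = of_real (cmod z) * (cis (Arg z) * cis (- Arg z))"
    by (subst (1) rcis_cmod_Arg[symmetric]) (simp add: rcis_def mult.assoc)
  also have "\<dots> = of_real (cmod z)"
    by (simp add: cis_mult)
  finally show ?thesis .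
qed

lemma homeomorphism_radial_twist:
  fixes \<phi> :: "real \<Rightarrow> real"
  assumes "continuous_on UNIV \<phi>"
  shows "homeomorphism UNIV UNIV (\<lambda>z. z * cis (\<phi> (cmod z))) (\<lambda>z. z * cis (- \<phi> (cmod z)))"
proof (rule homeomorphismI)
  have "continuous_on UNIV (\<lambda>z::complex. \<phi> (cmod z))"
    by (rule continuous_on_compose2[OF assms]) (auto intro: continuous_intros)
  then show "continuous_on UNIV (\<lambda>z. z * cis (\<phi> (cmod z)))"
    and "continuous_on UNIV (\<lambda>z. z * cis (- \<phi> (cmod z)))"
    by (auto intro!: continuous_intros)
qed (simp_all add: norm_mult mult.assoc cis_mult)

lemma homeomorphism_shear:
  fixes L :: "'a::real_normed_vector \<Rightarrow> 'b::real_normed_vector" and g :: "'b \<Rightarrow> real"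
  assumes "bounded_linear L" "L v = 0" "continuous_on UNIV g"
  shows "homeomorphism UNIV UNIV (\<lambda>z. z + g (L z) *\<^sub>R v) (\<lambda>z. z - g (L z) *\<^sub>R v)"
proof (rule homeomorphismI)
  have "continuous_on UNIV (\<lambda>z. g (L z))"
    by (rule continuous_on_compose2[OF assms(3) linear_continuous_on[OF assms(1)]]) simp
  then show "continuous_on UNIV (\<lambda>z. z + g (L z) *\<^sub>R v)"
    and "continuous_on UNIV (\<lambda>z. z - g (L z) *\<^sub>R v)"
    by (auto intro!: continuous_intros)
qed (use bounded_linear.linear[OF assms(1)] in
    \<open>simp_all add: linear_add linear_diff linear_scale assms(2)\<close>)

lemma discrete_subset_homeomorphism_into_Reals:
  fixes A :: "complex set"
  assumes "discrete_subset A"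
  obtains k k' :: "complex \<Rightarrow> complex" where "homeomorphism UNIV UNIV k k'" "k ` A \<subseteq> \<real>"
proof -
  obtain c where inj: "inj_on (\<lambda>a. dist a c) A"
    by (rule inj_on_dist_generic_point[OF discrete_subset_countable[OF assms]])
  obtain \<phi> where \<phi>: "continuous_on UNIV \<phi>"
    "\<And>r. r \<in> (\<lambda>a. dist a c) ` A \<Longrightarrow> \<phi> r = - Arg (inv_into A (\<lambda>a. dist a c) r - c)"
    by (rule discrete_subset_extension[OF discrete_subset_dist_image[OF assms, of c],
          where f = "\<lambda>r. - Arg (inv_into A (\<lambda>a. dist a c) r - c)"]) blast
  have hk: "homeomorphism UNIV UNIV
      ((\<lambda>z. z * cis (\<phi> (cmod z))) \<circ> (\<lambda>z. z - c))
      ((\<lambda>w. w + c) \<circ> (\<lambda>z. z * cis (- \<phi> (cmod z))))"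
    by (intro homeomorphism_compose[OF _ homeomorphism_radial_twist[OF \<phi>(1)]] homeomorphismI)
      (auto intro!: continuous_intros)
  have ka: "(a - c) * cis (\<phi> (cmod (a - c))) = of_real (dist a c)" if "a \<in> A" for a
  proof -
    have "\<phi> (cmod (a - c)) = - Arg (a - c)"
      using \<phi>(2)[of "dist a c"] inv_into_f_f[OF inj that] that by (simp add: dist_norm)
    then show ?thesis
      using mult_cis_minus_Arg[of "a - c"] by (simp add: dist_norm)
  qed
  show thesis
    by (rule that[OF hk]) (auto simp: ka)
qed

lemma extends_to_homeomorphism_Reals:
  fixes A B :: "complex set"
  assumes "discrete_subset A" "discrete_subset B" "A \<subseteq> \<real>" "B \<subseteq> \<real>" "bij_betw \<sigma> A B"
  shows "extends_to_homeomorphism \<sigma> A"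
proof -
  have "Re ` X = of_real -` X" if "X \<subseteq> \<real>" for X :: "complex set"
    using that by (auto simp: complex_is_Real_iff complex_eq_iff intro: rev_image_eqI)
  then have "discrete_subset (Re ` A)" "discrete_subset (Re ` B)"
    using discrete_subset_vimage[of "of_real :: real \<Rightarrow> complex"] assms(1-4)
    by (simp_all add: continuous_on_of_real_id inj_of_real)
  obtain g1 where g1: "continuous_on UNIV g1"
    "\<And>t. t \<in> Re ` A \<Longrightarrow> g1 t = Re (\<sigma> (of_real t))"
    by (rule discrete_subset_extension[OF \<open>discrete_subset (Re ` A)\<close>,
          where f = "\<lambda>t. Re (\<sigma> (of_real t))"]) blast
  obtain g2 where g2: "continuous_on UNIV g2"
    "\<And>s. s \<in> Re ` B \<Longrightarrow> g2 s = s - Re (inv_into A \<sigma> (of_real s))"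
    by (rule discrete_subset_extension[OF \<open>discrete_subset (Re ` B)\<close>,
          where f = "\<lambda>s. s - Re (inv_into A \<sigma> (of_real s))"]) blast
  have V1: "homeomorphism UNIV UNIV (\<lambda>z. z + g1 (Re z) *\<^sub>R \<i>) (\<lambda>z. z - g1 (Re z) *\<^sub>R \<i>)"
    by (rule homeomorphism_shear[OF bounded_linear_Re _ g1(1)]) simp
  have H2: "homeomorphism UNIV UNIV (\<lambda>z. z + g2 (Im z) *\<^sub>R 1) (\<lambda>z. z - g2 (Im z) *\<^sub>R 1)"
    by (rule homeomorphism_shear[OF bounded_linear_Im _ g2(1)]) simp
  have V3: "homeomorphism UNIV UNIV (\<lambda>z. z + (- Re z) *\<^sub>R \<i>) (\<lambda>z. z - (- Re z) *\<^sub>R \<i>)"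
    by (rule homeomorphism_shear[OF bounded_linear_Re]) (auto intro: continuous_intros)
  show ?thesis
  proof (rule extends_to_homeomorphismI[OF
        homeomorphism_compose[OF homeomorphism_compose[OF V1 H2] V3]])
    fix a assume "a \<in> A"
    then have "\<sigma> a \<in> B" "inv_into A \<sigma> (\<sigma> a) = a"
      using assms(5) by (auto simp: bij_betw_def)
    have real: "of_real (Re a) = a" "of_real (Re (\<sigma> a)) = \<sigma> a"
      using \<open>a \<in> A\<close> \<open>\<sigma> a \<in> B\<close> assms(3,4)
      by (auto simp: complex_is_Real_iff complex_eq_iff)
    have "g1 (Re a) = Re (\<sigma> a)"
      using g1(2)[of "Re a"] \<open>a \<in> A\<close> real by simp
    moreover have "g2 (Re (\<sigma> a)) = Re (\<sigma> a) - Re a"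
      using g2(2)[of "Re (\<sigma> a)"] \<open>\<sigma> a \<in> B\<close> real \<open>inv_into A \<sigma> (\<sigma> a) = a\<close> by simp
    ultimately show "((\<lambda>z. z + (- Re z) *\<^sub>R \<i>) \<circ>
        ((\<lambda>z. z + g2 (Im z) *\<^sub>R 1) \<circ> (\<lambda>z. z + g1 (Re z) *\<^sub>R \<i>))) a = \<sigma> a"
      using real by (simp add: complex_eq_iff)
  qed
qed

lemma sDH_complex: "sDH TYPE(complex)"
  unfolding sDH_iff
proof (intro allI impI, elim conjE)
  fix A B :: "complex set" and f
  assume A: "discrete_subset A" and B: "discrete_subset B" and f: "bij_betw f A B"
  obtain kA kA' :: "complex \<Rightarrow> complex"
    where kA: "homeomorphism UNIV UNIV kA kA'" "kA ` A \<subseteq> \<real>"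
    by (rule discrete_subset_homeomorphism_into_Reals[OF A]) blast
  obtain kB kB' :: "complex \<Rightarrow> complex"
    where kB: "homeomorphism UNIV UNIV kB kB'" "kB ` B \<subseteq> \<real>"
    by (rule discrete_subset_homeomorphism_into_Reals[OF B]) blast
  have "bij_betw (\<lambda>z. kB (f (kA' z))) (kA ` A) (kB ` B)"
    by (rule bij_betw_conjugate[where k' = kA' and l' = kB', OF _ _ f])
      (simp_all add: homeomorphism_apply1[OF kA(1)] homeomorphism_apply1[OF kB(1)])
  then have "extends_to_homeomorphism (\<lambda>z. kB (f (kA' z))) (kA ` A)"
    by (rule extends_to_homeomorphism_Reals[OF
          discrete_subset_homeomorphism_image[OF kA(1) A]
          discrete_subset_homeomorphism_image[OF kB(1) B] kA(2) kB(2)])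
  then show "extends_to_homeomorphism f A"
    by (rule extends_to_homeomorphism_conjugate[OF kA(1) kB(1)])
qed

theorem mainTheorem8:
  shows "sDH TYPE(real^2)"
proof -
  have "(UNIV :: complex set) homeomorphic (UNIV :: (real^2) set)"
    by (rule homeomorphic_subspaces) (simp_all add: dim_UNIV)
  then show ?thesis
    by (rule sDH_homeomorphic[OF _ sDH_complex])
qed

end
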